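(* For all $\alpha\in(0,\pi/4]$, $\beta_0(\alpha)>t(\alpha)$, where $\beta_0(\alpha)=\tfrac12\arccos\!\left(\frac{-2\cos(4\alpha)+\cos(6\alpha)+2}{3-2\cos(4\alpha)}\right)$ and $t(\alpha)=\arctan\!\left(\frac{\sin(3\alpha)-\sin\alpha}{3\cos\alpha-\cos(3\alpha)}\right)$. *)

theory Defs
  imports Complex_Main
begin

definition beta0 :: "real \<Rightarrow> real" where
  "beta0 \<alpha> = (1/2) * arccos ((- 2 * cos (4 * \<alpha>) + cos (6 * \<alpha>) + 2) / (3 - 2 * cos (4 * \<alpha>)))"

definition tfun :: "real \<Rightarrow> real" where
  "tfun \<alpha> = arctan ((sin (3 * \<alpha>) - sin \<alpha>) / (3 * cos \<alpha> - cos (3 * \<alpha>)))"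

end

theory Submission
  imports Defs
begin

(* Both sides are controlled by c = cos (2\<alpha>). The arccos argument in beta0 is the rational
  function (4c^3 - 4c^2 - 3c + 4) / (5 - 4c^2); by the triple-angle formulas
  tan (tfun \<alpha>) = c tan \<alpha> / (2 - c), and since tan^2 \<alpha> = (1 - c) / (1 + c) this gives
  cos (2 tfun \<alpha>) = (2 - 2c^2 + c^3) / (2 - c^2). For 0 \<le> c < 1 the second rational function
  exceeds the first, the difference having numerator 2 (1 - c) (1 + 4c + c^2 - 2c^3);
  as arccos is decreasing, 2 tfun \<alpha> < 2 beta0 \<alpha>. *)

lemma sin_triple_minus_sin: "sin (3 * x) - sin x = 2 * sin x * cos (2 * x)"
  for x :: real
  by (simp add: sin_diff_sin)

lemma three_cos_minus_cos_triple: "3 * cos x - cos (3 * x) = 2 * cos x * (2 - cos (2 * x))"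
  for x :: real
  unfolding cos_treble_cos cos_double_cos by (simp add: algebra_simps power2_eq_square power3_eq_cube)

lemma tan_square_eq_cos_double:
  fixes x :: real
  assumes "cos x \<noteq> 0"
  shows "tan x ^ 2 = (1 - cos (2 * x)) / (1 + cos (2 * x))"
proof -
  have "1 + tan x ^ 2 > 0"
    by (simp add: add_pos_nonneg)
  then show ?thesis
    unfolding cos_tan_half[OF assms] by (simp add: field_simps)
qed

lemma cos_double_arctan: "cos (2 * arctan u) = (1 - u\<^sup>2) / (1 + u\<^sup>2)"
  using cos_tan_half[of "arctan u"] by (simp add: tan_arctan)

lemma beta0_eq_arccos:
  assumes c: "c = cos (2 * \<alpha>)"
  shows "beta0 \<alpha> = arccos ((4 * c^3 - 4 * c^2 - 3 * c + 4) / (5 - 4 * c^2)) / 2"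
proof -
  have "cos (4 * \<alpha>) = 2 * c^2 - 1"
    using cos_double_cos[of "2 * \<alpha>"] c by simp
  moreover have "cos (6 * \<alpha>) = 4 * c^3 - 3 * c"
    using cos_treble_cos[of "2 * \<alpha>"] c by simp
  ultimately show ?thesis
    unfolding beta0_def by (simp only:) (simp add: algebra_simps)
qed

lemma tfun_eq_arctan: "tfun \<alpha> = arctan (cos (2 * \<alpha>) * tan \<alpha> / (2 - cos (2 * \<alpha>)))"
  unfolding tfun_def sin_triple_minus_sin three_cos_minus_cos_triple tan_def
  by (simp add: mult.commute)

lemma one_minus_div_one_plus_eq:
  fixes c :: real
  assumes "-1 < c" "c \<le> 1" and q: "q = c^2 * (1 - c) / ((1 + c) * (2 - c)^2)"
  shows "(1 - q) / (1 + q) = (2 - 2 * c^2 + c^3) / (2 - c^2)"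
proof -
  define D where "D = (1 + c) * (2 - c)^2"
  define N where "N = c^2 * (1 - c)"
  have "D > 0"
    unfolding D_def using assms by simp
  moreover have "N \<ge> 0"
    unfolding N_def using assms by simp
  ultimately have "(1 - q) / (1 + q) = (D - N) / (D + N)"
    unfolding q D_def[symmetric] N_def[symmetric]
    by (simp add: add_pos_nonneg divide_simps)
  also have "\<dots> = (2 * (2 - 2 * c^2 + c^3)) / (2 * (2 - c^2))"
    unfolding D_def N_def by (simp add: algebra_simps power2_eq_square power3_eq_cube)
  also have "\<dots> = (2 - 2 * c^2 + c^3) / (2 - c^2)"
    by (rule mult_divide_mult_cancel_left) simp
  finally show ?thesis .
qed

lemma cos_double_tfun:
  assumes "cos \<alpha> \<noteq> 0" and c: "c = cos (2 * \<alpha>)"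
  shows "cos (2 * tfun \<alpha>) = (2 - 2 * c^2 + c^3) / (2 - c^2)"
proof -
  have "1 + c = 2 * cos \<alpha> ^ 2"
    unfolding c cos_double_cos by simp
  moreover have "cos \<alpha> ^ 2 > 0"
    using assms(1) by simp
  ultimately have "-1 < c"
    by linarith
  moreover have "(c * tan \<alpha> / (2 - c))\<^sup>2 = c^2 * (1 - c) / ((1 + c) * (2 - c)^2)"
    using tan_square_eq_cos_double[OF assms(1)]
    by (simp add: c power_divide power_mult_distrib)
  ultimately show ?thesis
    unfolding tfun_eq_arctan cos_double_arctan c[symmetric]
    by (intro one_minus_div_one_plus_eq) (auto simp: c)
qed

lemma beta0_argument_ge_minus_one:
  fixes c :: real
  assumes "0 \<le> c" "c \<le> 1"
  shows "-1 \<le> (4 * c^3 - 4 * c^2 - 3 * c + 4) / (5 - 4 * c^2)"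
proof -
  have "c^2 \<le> c"
    using assms power_decreasing[of 1 2 c] by simp
  then have "(1 - c) * (7 + 4 * c - 4 * c^2) \<ge> 0"
    using assms by simp
  moreover have "(4 * c^3 - 4 * c^2 - 3 * c + 4) + (5 - 4 * c^2) = 2 + (1 - c) * (7 + 4 * c - 4 * c^2)"
    by (simp add: algebra_simps power2_eq_square power3_eq_cube)
  moreover have "5 - 4 * c^2 > 0"
    using \<open>c^2 \<le> c\<close> assms by linarith
  ultimately show ?thesis
    by (simp add: divide_simps)
qed

lemma beta0_argument_less:
  fixes c :: real
  assumes "0 \<le> c" "c < 1"
  shows "(4 * c^3 - 4 * c^2 - 3 * c + 4) / (5 - 4 * c^2) < (2 - 2 * c^2 + c^3) / (2 - c^2)"
proof -
  have "c^2 \<le> c" and "c^3 \<le> c"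
    using assms power_decreasing[of 1 _ c] by auto
  then have "1 + 4 * c + c^2 - 2 * c^3 > 0"
    using assms zero_le_power2[of c] by linarith
  then have "(1 - c) * (1 + 4 * c + c^2 - 2 * c^3) > 0"
    using assms by simp
  moreover have "(2 - 2 * c^2 + c^3) * (5 - 4 * c^2) - (4 * c^3 - 4 * c^2 - 3 * c + 4) * (2 - c^2)
      = 2 * ((1 - c) * (1 + 4 * c + c^2 - 2 * c^3))"
    by (simp add: algebra_simps power2_eq_square power3_eq_cube)
  moreover have "5 - 4 * c^2 > 0" and "2 - c^2 > 0"
    using \<open>c^2 \<le> c\<close> assms by linarith+
  ultimately show ?thesis
    by (simp add: divide_simps)
qed

theorem mainTheorem15:
  fixes \<alpha> :: real
  assumes "0 < \<alpha>" and "\<alpha> \<le> pi / 4"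
  shows "beta0 \<alpha> > tfun \<alpha>"
proof -
  define c where "c = cos (2 * \<alpha>)"
  have c0: "0 \<le> c"
    unfolding c_def using assms by (intro cos_ge_zero) auto
  have c1: "c < 1"
    unfolding c_def using assms pi_less_4 by (intro cos_double_less_one) auto
  have "cos \<alpha> > 0" and "tan \<alpha> > 0"
    using assms by (auto intro!: cos_gt_zero tan_gt_zero)
  then have "0 \<le> tfun \<alpha>"
    unfolding tfun_eq_arctan c_def[symmetric] using c0 c1 by simp
  moreover have "2 * tfun \<alpha> \<le> pi"
    using arctan_ubound[of "c * tan \<alpha> / (2 - c)"] unfolding tfun_eq_arctan c_def by linarith
  ultimately have "2 * tfun \<alpha> = arccos (cos (2 * tfun \<alpha>))"
    by (simp add: arccos_cos)
  also have "\<dots> < arccos ((4 * c^3 - 4 * c^2 - 3 * c + 4) / (5 - 4 * c^2))"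
  proof (rule arccos_less_arccos)
    show "(4 * c^3 - 4 * c^2 - 3 * c + 4) / (5 - 4 * c^2) < cos (2 * tfun \<alpha>)"
      using beta0_argument_less[OF c0 c1] cos_double_tfun[OF _ c_def] \<open>cos \<alpha> > 0\<close> by simp
  qed (use beta0_argument_ge_minus_one c0 c1 in auto)
  also have "\<dots> = 2 * beta0 \<alpha>"
    using beta0_eq_arccos[OF c_def] by simp
  finally show ?thesis
    by simp
qed

end
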